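(* Let $K$ be a virtual knot with classical crossing number $c(K)=n$, and suppose $K$ has a Gauss code $\omega_K$ (coming from a diagram of $K$ with $n$ classical crossings) with $M(\omega_K)=n$. Then $n=\tau(K)=\rho(K)$.
   Context: Mosaic tiles are the eleven standard unit-square tiles $T_0,\dots,T_{10}$ ($T_0$ blank; $T_1,\dots,T_8$ non-crossing tiles with one or two arcs; $T_9,T_{10}$ the two crossing tiles, each containing a horizontal and a vertical strand crossing at the center). A virtual rectangular mosaic is an $m\times n$ array of tiles together with a pairing of the $2(m+n)$ boundary unit edges whose quotient is a closed orientable surface carrying a knot diagram; it represents a virtual knot. A row mosaic is a $1\times n$ virtual rectangular mosaic. The tile number $\tau(K)$ is the minimal number of tiles of a virtual rectangular mosaic representing $K$; the row number $\rho(K)$ is the minimal $n$ such that $K$ is represented by a $1\times n$ row mosaic. The classical crossing number $c(K)$ is the minimal number of classical crossings in a virtual diagram of $K$. A Gauss code of a diagram with classical crossings labeled $1,\dots,n$ is the cyclic sequence of length $2n$ recording, while traversing the knot, each classical crossing passed (with over/under and sign information). $M(\omega_K)$ denotes the length of a longest consecutive subsequence of $\omega_K$ in which no crossing label appears twice. *)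

theory Defs
  imports Main
begin

text \<open>A Gauss code entry is (crossing label, is_over, sign_is_positive).
  A Gauss code is a list, read cyclically.\<close>

type_synonym gentry = "nat \<times> bool \<times> bool"
type_synonym gcode = "gentry list"

definition valid_gc :: "gcode \<Rightarrow> bool" where
  "valid_gc w \<longleftrightarrow> (\<forall>l \<in> fst ` set w. \<exists>s.
      filter (\<lambda>e. fst e = l) w \<in> {[(l, True, s), (l, False, s)], [(l, False, s), (l, True, s)]})"

definition labels :: "gcode \<Rightarrow> nat set" where
  "labels w = fst ` set w"

text \<open>R3 segments: top strand (over at x and y), middle strand (under at x, over at z),
  bottom strand (under at y and z).  The boolean says whether the strand meets the
  crossings in the listed order.\<close>

definition segT :: "bool \<Rightarrow> nat \<Rightarrow> nat \<Rightarrow> bool \<Rightarrow> bool \<Rightarrow> gcode" where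
  "segT t x y sx sy = (if t then [(x, True, sx), (y, True, sy)] else [(y, True, sy), (x, True, sx)])"

definition segM :: "bool \<Rightarrow> nat \<Rightarrow> nat \<Rightarrow> bool \<Rightarrow> bool \<Rightarrow> gcode" where
  "segM m x z sx sz = (if m then [(x, False, sx), (z, True, sz)] else [(z, True, sz), (x, False, sx)])"

definition segB :: "bool \<Rightarrow> nat \<Rightarrow> nat \<Rightarrow> bool \<Rightarrow> bool \<Rightarrow> gcode" where
  "segB b y z sy sz = (if b then [(y, False, sy), (z, False, sz)] else [(z, False, sz), (y, False, sy)])"

inductive vmove :: "gcode \<Rightarrow> gcode \<Rightarrow> bool" where
  rot: "vmove w (rotate k w)"
| relabel: "inj f \<Longrightarrow> vmove w (map (\<lambda>(l, ov, s). (f l, ov, s)) w)"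
| R1: "i \<notin> labels (u @ v) \<Longrightarrow> vmove (u @ v) (u @ [(i, ov, s), (i, \<not> ov, s)] @ v)"
| R2: "i \<noteq> j \<Longrightarrow> i \<notin> labels (b @ c) \<Longrightarrow> j \<notin> labels (b @ c) \<Longrightarrow>
       Q \<in> {[(i, False, s), (j, False, \<not> s)], [(j, False, \<not> s), (i, False, s)]} \<Longrightarrow>
       vmove (b @ c) ([(i, True, s), (j, True, \<not> s)] @ b @ Q @ c)"
| R3a: "distinct [x, y, z] \<Longrightarrow> {x, y, z} \<inter> labels (a @ b @ c @ d) = {} \<Longrightarrow>
       ((sy = sz) = (t = m)) \<Longrightarrow> ((sx = sz) = (t = bo)) \<Longrightarrow>
       vmove (a @ segT t x y sx sy @ b @ segM m x z sx sz @ c @ segB bo y z sy sz @ d)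
             (a @ segT (\<not> t) x y sx sy @ b @ segM (\<not> m) x z sx sz @ c @ segB (\<not> bo) y z sy sz @ d)"
| R3b: "distinct [x, y, z] \<Longrightarrow> {x, y, z} \<inter> labels (a @ b @ c @ d) = {} \<Longrightarrow>
       ((sy = sz) = (t = m)) \<Longrightarrow> ((sx = sz) = (t = bo)) \<Longrightarrow>
       vmove (a @ segT t x y sx sy @ b @ segB bo y z sy sz @ c @ segM m x z sx sz @ d)
             (a @ segT (\<not> t) x y sx sy @ b @ segB (\<not> bo) y z sy sz @ c @ segM (\<not> m) x z sx sz @ d)"

definition vequiv :: "gcode \<Rightarrow> gcode \<Rightarrow> bool" where
  "vequiv = (symclp vmove)\<^sup>*\<^sup>*"

definition crossing_number :: "gcode \<Rightarrow> nat" where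
  "crossing_number K = (LEAST n. \<exists>w. vequiv K w \<and> length w = 2 * n)"

definition max_window :: "gcode \<Rightarrow> nat" where
  "max_window w = Max {k. k \<le> length w \<and> (\<exists>r. distinct (map fst (take k (rotate r w))))}"

datatype side = N | E | S | W

text \<open>T0 blank; T1..T4 single corner arcs; T5 horizontal; T6 vertical;
  T7, T8 double arcs; T9 crossing with horizontal strand over; T10 vertical over.\<close>
datatype tile = T0 | T1 | T2 | T3 | T4 | T5 | T6 | T7 | T8 | T9 | T10

fun conn :: "tile \<Rightarrow> side \<Rightarrow> side option" where
  "conn T0 _ = None"
| "conn T1 N = Some W" | "conn T1 W = Some N" | "conn T1 _ = None"
| "conn T2 N = Some E" | "conn T2 E = Some N" | "conn T2 _ = None"
| "conn T3 E = Some S" | "conn T3 S = Some E" | "conn T3 _ = None"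
| "conn T4 S = Some W" | "conn T4 W = Some S" | "conn T4 _ = None"
| "conn T5 W = Some E" | "conn T5 E = Some W" | "conn T5 _ = None"
| "conn T6 N = Some S" | "conn T6 S = Some N" | "conn T6 _ = None"
| "conn T7 N = Some W" | "conn T7 W = Some N" | "conn T7 E = Some S" | "conn T7 S = Some E"
| "conn T8 N = Some E" | "conn T8 E = Some N" | "conn T8 S = Some W" | "conn T8 W = Some S"
| "conn T9 N = Some S" | "conn T9 S = Some N" | "conn T9 E = Some W" | "conn T9 W = Some E"
| "conn T10 N = Some S" | "conn T10 S = Some N" | "conn T10 E = Some W" | "conn T10 W = Some E"

text \<open>A port (i, j, d): side d of the tile in row i (row 0 on top), column j.\<close>
type_synonym port = "nat \<times> nat \<times> side"

definition in_mosaic :: "nat \<Rightarrow> nat \<Rightarrow> port \<Rightarrow> bool" where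
  "in_mosaic m n p = (case p of (i, j, d) \<Rightarrow> i < m \<and> j < n)"

definition bport :: "nat \<Rightarrow> nat \<Rightarrow> port \<Rightarrow> bool" where
  "bport m n p = (case p of (i, j, d) \<Rightarrow> i < m \<and> j < n \<and>
      (d = N \<and> i = 0 \<or> d = S \<and> i = m - 1 \<or> d = W \<and> j = 0 \<or> d = E \<and> j = n - 1))"

definition across :: "nat \<Rightarrow> nat \<Rightarrow> (port \<Rightarrow> port) \<Rightarrow> port \<Rightarrow> port" where
  "across m n P p = (if bport m n p then P p else
     (case p of (i, j, N) \<Rightarrow> (i - 1, j, S) | (i, j, S) \<Rightarrow> (i + 1, j, N)
              | (i, j, W) \<Rightarrow> (i, j - 1, E) | (i, j, E) \<Rightarrow> (i, j + 1, W)))"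

definition sport :: "nat \<Rightarrow> nat \<Rightarrow> (nat \<Rightarrow> nat \<Rightarrow> tile) \<Rightarrow> port \<Rightarrow> bool" where
  "sport m n T p = (case p of (i, j, d) \<Rightarrow> i < m \<and> j < n \<and> conn (T i j) d \<noteq> None)"

definition link :: "nat \<Rightarrow> nat \<Rightarrow> (nat \<Rightarrow> nat \<Rightarrow> tile) \<Rightarrow> (port \<Rightarrow> port) \<Rightarrow> port \<Rightarrow> port \<Rightarrow> bool" where
  "link m n T P p q = (sport m n T p \<and>
     (q = across m n P p \<or> (case p of (i, j, d) \<Rightarrow> \<exists>d'. conn (T i j) d = Some d' \<and> q = (i, j, d'))))"

text \<open>An m x n virtual rectangular mosaic: tiles T, and a fixed-point-free involutive pairing P
  of the boundary unit edges (glued orientation-reversingly, so the quotient is a closed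
  orientable surface), such that the strands glue to a single closed curve (a knot diagram).\<close>
definition valid_mosaic :: "nat \<Rightarrow> nat \<Rightarrow> (nat \<Rightarrow> nat \<Rightarrow> tile) \<Rightarrow> (port \<Rightarrow> port) \<Rightarrow> bool" where
  "valid_mosaic m n T P \<longleftrightarrow> 0 < m \<and> 0 < n \<and>
     (\<forall>p. bport m n p \<longrightarrow> bport m n (P p) \<and> P p \<noteq> p \<and> P (P p) = p) \<and>
     (\<forall>p. in_mosaic m n p \<longrightarrow> (sport m n T p \<longleftrightarrow> sport m n T (across m n P p))) \<and>
     (\<exists>p. sport m n T p) \<and>
     (\<forall>p q. sport m n T p \<longrightarrow> sport m n T q \<longrightarrow> (link m n T P)\<^sup>*\<^sup>* p q)"

definition step :: "nat \<Rightarrow> nat \<Rightarrow> (nat \<Rightarrow> nat \<Rightarrow> tile) \<Rightarrow> (port \<Rightarrow> port) \<Rightarrow> port \<Rightarrow> port" where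
  "step m n T P p = (case p of (i, j, d) \<Rightarrow> across m n P (i, j, the (conn (T i j) d)))"

definition orbit_len :: "nat \<Rightarrow> nat \<Rightarrow> (nat \<Rightarrow> nat \<Rightarrow> tile) \<Rightarrow> (port \<Rightarrow> port) \<Rightarrow> port \<Rightarrow> nat" where
  "orbit_len m n T P p0 = (LEAST k. 0 < k \<and> (step m n T P ^^ k) p0 = p0)"

definition visits :: "nat \<Rightarrow> nat \<Rightarrow> (nat \<Rightarrow> nat \<Rightarrow> tile) \<Rightarrow> (port \<Rightarrow> port) \<Rightarrow> port \<Rightarrow> port list" where
  "visits m n T P p0 = map (\<lambda>k. (step m n T P ^^ k) p0) [0..<orbit_len m n T P p0]"

text \<open>Sign convention: positive iff cross(dir_over, dir_under) > 0, with the y-axis pointing up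
  (towards row 0).  Entering at W means moving east; entering at S means moving north.\<close>
definition mosaic_code :: "nat \<Rightarrow> nat \<Rightarrow> (nat \<Rightarrow> nat \<Rightarrow> tile) \<Rightarrow> (port \<Rightarrow> port) \<Rightarrow> port \<Rightarrow> gcode" where
  "mosaic_code m n T P p0 =
     (let vs = visits m n T P p0 in
      concat (map (\<lambda>(i, j, d).
        if T i j = T9 \<or> T i j = T10 then
          [(i * n + j,
            (if T i j = T9 then d = E \<or> d = W else d = N \<or> d = S),
            (((i, j, W) \<in> set vs) = ((i, j, S) \<in> set vs)) = (T i j = T9))]
        else []) vs))"

definition mosaic_represents :: "nat \<Rightarrow> nat \<Rightarrow> (nat \<Rightarrow> nat \<Rightarrow> tile) \<Rightarrow> (port \<Rightarrow> port) \<Rightarrow> gcode \<Rightarrow> bool" where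
  "mosaic_represents m n T P K \<longleftrightarrow> valid_mosaic m n T P \<and>
     (\<exists>p0. sport m n T p0 \<and> vequiv (mosaic_code m n T P p0) K)"

definition tile_number :: "gcode \<Rightarrow> nat" where
  "tile_number K = (LEAST t. \<exists>m n T P. t = m * n \<and> mosaic_represents m n T P K)"

definition row_number :: "gcode \<Rightarrow> nat" where
  "row_number K = (LEAST n. \<exists>T P. mosaic_represents 1 n T P K)"

end

theory Submission
  imports Defs
begin

text \<open>
  Lower bound: Reidemeister moves preserve the property that every label occurs exactly zero or
  two times, so every Gauss code equivalent to \<open>K\<close> has at least \<open>2 c(K)\<close> entries; the code
  read off an \<open>m \<times> n\<close> mosaic uses at most one label per tile, hence \<open>c(K) \<le> m n\<close>.

  Upper bound: rotate \<open>\<omega>\<close> so that its first \<open>n\<close> entries carry distinct labels.  Then every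
  crossing is met exactly once in each half, the second half in the order of some permutation
  \<open>\<sigma>\<close>.  Place crossing \<open>j\<close> in tile \<open>j\<close> of a \<open>1 \<times> n\<close> row: the first half runs west to east along
  the row, the second half runs through the tiles \<open>\<sigma> 0, \<dots>, \<sigma> (n - 1)\<close> vertically, and the
  boundary pairing joins the consecutive passes.  The resulting code is \<open>\<omega>\<close> up to relabelling.
\<close>

section \<open>Equivalence of Gauss codes and label counts\<close>

lemma vequiv_sym: "vequiv a b \<Longrightarrow> vequiv b a"
  unfolding vequiv_def by (meson symp_rtranclp_symclp sympD)

lemma vequiv_trans: "vequiv a b \<Longrightarrow> vequiv b c \<Longrightarrow> vequiv a c"
  unfolding vequiv_def by (rule rtranclp_trans)

lemma vmove_imp_vequiv: "vmove a b \<Longrightarrow> vequiv a b"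
  unfolding vequiv_def by (simp add: r_into_rtranclp symclpI)

lemma vequiv_relabel_inj_on:
  assumes "inj_on f (labels w)"
  shows "vequiv w (map (\<lambda>(l, ov, s). (f l, ov, s)) w)"
proof -
  \<comment> \<open>extend \<open>f\<close> injectively by shifting all other labels above its range\<close>
  define M where "M = Suc (Max (f ` labels w))"
  define g where "g x = (if x \<in> labels w then f x else x + M)" for x
  have "finite (labels w)" by (simp add: labels_def)
  then have "y \<in> labels w \<Longrightarrow> f y < M" for y
    by (simp add: M_def le_imp_less_Suc)
  then have "inj g"
    using assms by (fastforce simp: g_def inj_on_def split: if_splits)
  moreover have "map (\<lambda>(l, ov, s). (g l, ov, s)) w = map (\<lambda>(l, ov, s). (f l, ov, s)) w"
    by (force simp: g_def labels_def)
  ultimately show ?thesis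
    by (metis vmove.relabel vmove_imp_vequiv)
qed

definition twice_labelled :: "gcode \<Rightarrow> bool" where
  "twice_labelled w \<longleftrightarrow> (\<forall>l. count_list (map fst w) l \<in> {0, 2})"

lemma count_list_rotate1: "count_list (rotate1 xs) x = count_list xs x"
  by (cases xs) auto

lemma count_list_rotate [simp]: "count_list (rotate k xs) x = count_list xs x"
  by (induction k) (simp_all add: count_list_rotate1)

lemma map_fst_segT: "map fst (segT t x y sx sy) = (if t then [x, y] else [y, x])"
  and map_fst_segM: "map fst (segM m x z sx sz) = (if m then [x, z] else [z, x])"
  and map_fst_segB: "map fst (segB b y z sy sz) = (if b then [y, z] else [z, y])"
  by (simp_all add: segT_def segM_def segB_def)

lemma count_list_swap: "count_list (if t then [x, y] else [y, x]) l = count_list [x, y] l"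
  by simp

lemma twice_labelled_relabel:
  assumes "inj f"
  shows "twice_labelled (map (\<lambda>(l, ov, s). (f l, ov, s)) w) \<longleftrightarrow> twice_labelled w"
proof -
  have fst_map: "map fst (map (\<lambda>(l, ov, s). (f l, ov, s)) w) = map f (map fst w)"
    by (induction w) auto
  have "count_list (map f (map fst w)) l = 0" if "l \<notin> range f" for l
    using that by (auto simp: count_list_0_iff)
  then show ?thesis
    unfolding twice_labelled_def fst_map
    by (metis count_list_map_conv[OF assms] insertI1 rangeE)
qed

lemma vmove_twice_labelled: "vmove w w' \<Longrightarrow> twice_labelled w' \<longleftrightarrow> twice_labelled w"
proof (induction rule: vmove.induct)
  case (rot w k)
  then show ?case by (simp add: twice_labelled_def flip: rotate_map)
next
  case (relabel f w)
  then show ?case by (rule twice_labelled_relabel)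
next
  case (R1 i u v ov s)
  then have "count_list (map fst (u @ v)) i = 0"
    by (auto simp: labels_def count_list_0_iff)
  then show ?case by (auto simp: twice_labelled_def)
next
  case (R2 i j b c Q s)
  then have "count_list (map fst (b @ c)) i = 0" "count_list (map fst (b @ c)) j = 0"
    by (auto simp: labels_def count_list_0_iff)
  moreover have "count_list (map fst Q) l = count_list [i, j] l" for l
    using R2(4) by auto
  ultimately show ?case
    using R2(1) by (auto simp: twice_labelled_def)
qed (simp_all add: twice_labelled_def map_fst_segT map_fst_segM map_fst_segB count_list_swap
       del: count_list.simps)

lemma vequiv_twice_labelled: "vequiv w w' \<Longrightarrow> twice_labelled w' \<longleftrightarrow> twice_labelled w"
  unfolding vequiv_def
proof (induction rule: rtranclp_induct)
  case (step y z)
  then show ?case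
    using vmove_twice_labelled by (auto simp: symclp_def)
qed simp

lemma count_list_map_fst: "count_list (map fst w) l = length (filter (\<lambda>e. fst e = l) w)"
  by (induction w) auto

lemma valid_gc_twice_labelled:
  assumes "valid_gc w"
  shows "twice_labelled w"
  unfolding twice_labelled_def count_list_map_fst
proof
  fix l
  show "length (filter (\<lambda>e. fst e = l) w) \<in> {0, 2}"
  proof (cases "l \<in> fst ` set w")
    case True
    then show ?thesis
      using assms unfolding valid_gc_def by fastforce
  next
    case False
    then have "filter (\<lambda>e. fst e = l) w = []"
      by (force simp: filter_empty_conv)
    then show ?thesis by simp
  qed
qed

lemma twice_labelled_length:
  assumes "twice_labelled w"
  shows "length w = 2 * card (labels w)"
proof -
  have "length w = sum (count_list (map fst w)) (labels w)"
    by (simp add: sum_count_set labels_def)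
  also have "\<dots> = sum (\<lambda>_. 2) (labels w)"
    using assms by (intro sum.cong) (auto simp: twice_labelled_def labels_def count_list_0_iff)
  finally show ?thesis by simp
qed

section \<open>Mosaics have at least as many tiles as crossings\<close>

lemma in_mosaic_across:
  assumes "\<forall>p. bport m n p \<longrightarrow> bport m n (P p)" "in_mosaic m n p"
  shows "in_mosaic m n (across m n P p)"
proof (cases "bport m n p")
  case True
  then have "bport m n (P p)" using assms(1) by blast
  with True show ?thesis
    by (auto simp: across_def bport_def in_mosaic_def split: prod.splits)
next
  case False
  obtain i j d where "p = (i, j, d)" by (cases p)
  with False assms(2) show ?thesis
    by (cases d) (auto simp: across_def bport_def in_mosaic_def)
qed

lemma in_mosaic_funpow_step:
  assumes "\<forall>p. bport m n p \<longrightarrow> bport m n (P p)" "in_mosaic m n p"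
  shows "in_mosaic m n ((step m n T P ^^ k) p)"
proof (induction k)
  case (Suc k)
  obtain i j d where ijd: "(step m n T P ^^ k) p = (i, j, d)" by (cases "(step m n T P ^^ k) p")
  with Suc have "in_mosaic m n (i, j, the (conn (T i j) d))"
    by (simp add: in_mosaic_def)
  moreover have "(step m n T P ^^ Suc k) p = across m n P (i, j, the (conn (T i j) d))"
    using ijd by (simp add: step_def)
  ultimately show ?case
    using in_mosaic_across[OF assms(1)] by simp
qed (simp add: assms(2))

lemma labels_mosaic_code:
  assumes "valid_mosaic m n T P" "sport m n T p0"
  shows "labels (mosaic_code m n T P p0) \<subseteq> (\<lambda>(i, j). i * n + j) ` ({..<m} \<times> {..<n})"
proof -
  have "labels (mosaic_code m n T P p0) \<subseteq> (\<lambda>(i, j, d). i * n + j) ` set (visits m n T P p0)"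
    by (force simp: labels_def mosaic_code_def Let_def split: if_splits)
  moreover have "in_mosaic m n p" if "p \<in> set (visits m n T P p0)" for p
  proof -
    have "\<forall>p. bport m n p \<longrightarrow> bport m n (P p)"
      using assms(1) by (simp add: valid_mosaic_def)
    moreover have "in_mosaic m n p0"
      using assms(2) by (auto simp: sport_def in_mosaic_def split: prod.splits)
    ultimately have "in_mosaic m n ((step m n T P ^^ k) p0)" for k
      by (rule in_mosaic_funpow_step)
    with that show ?thesis by (auto simp: visits_def)
  qed
  ultimately show ?thesis
    by (force simp: in_mosaic_def)
qed

lemma crossing_number_le_tiles:
  assumes "valid_gc K" "mosaic_represents m n T P K"
  shows "crossing_number K \<le> m * n"
proof -
  obtain p0 where p0: "valid_mosaic m n T P" "sport m n T p0"
    and equiv: "vequiv (mosaic_code m n T P p0) K"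
    using assms(2) by (auto simp: mosaic_represents_def)
  define c where "c = mosaic_code m n T P p0"
  have "twice_labelled c"
    using assms(1) equiv vequiv_twice_labelled valid_gc_twice_labelled by (auto simp: c_def)
  then have "length c = 2 * card (labels c)"
    by (rule twice_labelled_length)
  then have "crossing_number K \<le> card (labels c)"
    unfolding crossing_number_def
    using equiv by (intro Least_le) (auto simp: c_def intro: vequiv_sym)
  also have "\<dots> \<le> card ((\<lambda>(i, j). i * n + j) ` ({..<m} \<times> {..<n}))"
    using labels_mosaic_code[OF p0] by (intro card_mono) (auto simp: c_def)
  also have "\<dots> \<le> m * n"
    using card_image_le[of "{..<m} \<times> {..<n}"] by (simp add: card_cartesian_product)
  finally show ?thesis .
qed

lemma tile_number_row_number_eq:
  assumes "mosaic_represents 1 n T P K"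
    and "\<And>m n' T P. mosaic_represents m n' T P K \<Longrightarrow> n \<le> m * n'"
  shows "tile_number K = n \<and> row_number K = n"
proof
  show "tile_number K = n"
    unfolding tile_number_def
    by (rule Least_equality) (use assms in \<open>force+\<close>)
  show "row_number K = n"
    unfolding row_number_def
    by (rule Least_equality) (use assms in \<open>force+\<close>)
qed

lemma mosaic_represents_vequiv:
  "mosaic_represents m n T P w \<Longrightarrow> vequiv w K \<Longrightarrow> mosaic_represents m n T P K"
  unfolding mosaic_represents_def by (meson vequiv_trans)

section \<open>A row mosaic for a Gauss code split into two halves\<close>

fun opposite :: "side \<Rightarrow> side" where
  "opposite N = S" | "opposite S = N" | "opposite W = E" | "opposite E = W"

lemma opposite_opposite [simp]: "opposite (opposite d) = d"
  by (cases d) simp_all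

text \<open>
  The row mosaic realising the code
  \<open>(0, ov 0, s 0) \<dots> (n-1, ov (n-1), s (n-1)) (\<sigma> 0, \<not> ov (\<sigma> 0), s (\<sigma> 0)) \<dots>\<close>.  The \<open>k\<close>-th vertical pass
  crosses tile \<open>\<sigma> k\<close> from \<open>pass_entry k\<close> to \<open>pass_exit k\<close>; it runs upward exactly when this makes
  the sign of the crossing equal to \<open>s (\<sigma> k)\<close>.  The pairing glues the east end of the row to the
  first vertical entry, each vertical exit to the next entry, and the last exit to the west end.
\<close>

locale row_mosaic =
  fixes n :: nat and \<sigma> :: "nat \<Rightarrow> nat" and ov s :: "nat \<Rightarrow> bool"
  assumes n_pos: "0 < n" and bij: "bij_betw \<sigma> {..<n} {..<n}"
begin

\<comment> \<open>otherwise the simplifier turns the height \<open>1\<close> into \<open>Suc 0\<close> and lemmas about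
  \<open>step 1 n\<close>, \<open>sport 1 n\<close>, \<dots> stop matching\<close>
declare One_nat_def [simp del]

definition \<tau> :: "nat \<Rightarrow> nat" where
  "\<tau> = inv_into {..<n} \<sigma>"

definition upward :: "nat \<Rightarrow> bool" where
  "upward k \<longleftrightarrow> s (\<sigma> k) = ov (\<sigma> k)"

definition pass_entry :: "nat \<Rightarrow> port" where
  "pass_entry k = (0, \<sigma> k, if upward k then S else N)"

definition pass_exit :: "nat \<Rightarrow> port" where
  "pass_exit k = (0, \<sigma> k, if upward k then N else S)"

definition tiles :: "nat \<Rightarrow> nat \<Rightarrow> tile" where
  "tiles i j = (if ov j then T9 else T10)"

definition pairing :: "port \<Rightarrow> port" where
  "pairing p =
     (if p = (0, n - 1, E) then pass_entry 0
      else if p = (0, 0, W) then pass_exit (n - 1)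
      else case p of (i, j, d) \<Rightarrow>
        if p = pass_entry (\<tau> j) then (if \<tau> j = 0 then (0, n - 1, E) else pass_exit (\<tau> j - 1))
        else if p = pass_exit (\<tau> j) then (if \<tau> j = n - 1 then (0, 0, W) else pass_entry (\<tau> j + 1))
        else p)"

text \<open>\<open>tour k\<close> is the port through which the knot enters its \<open>k\<close>-th tile.\<close>

definition tour :: "nat \<Rightarrow> port" where
  "tour k = (if k < n then (0, k, W) else pass_entry (k - n))"

lemma \<sigma>_less: "k < n \<Longrightarrow> \<sigma> k < n"
  using bij by (auto simp: bij_betw_def)

lemma \<tau>_\<sigma>: "k < n \<Longrightarrow> \<tau> (\<sigma> k) = k"
  using bij by (simp add: \<tau>_def bij_betw_inv_into_left)

lemma \<sigma>_\<tau>: "j < n \<Longrightarrow> \<sigma> (\<tau> j) = j"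
  using bij by (simp add: \<tau>_def bij_betw_inv_into_right)

lemma \<tau>_less: "j < n \<Longrightarrow> \<tau> j < n"
  using bij unfolding \<tau>_def bij_betw_def by (metis inv_into_into lessThan_iff)

lemma \<sigma>_eq_iff: "k < n \<Longrightarrow> k' < n \<Longrightarrow> \<sigma> k = \<sigma> k' \<longleftrightarrow> k = k'"
  by (metis \<tau>_\<sigma>)

lemma pass_entry_neq_exit: "k < n \<Longrightarrow> k' < n \<Longrightarrow> pass_entry k \<noteq> pass_exit k'"
  by (auto simp: pass_entry_def pass_exit_def \<sigma>_eq_iff)

lemma pass_neq_horizontal [simp]:
  "pass_entry k \<noteq> (i, j, E)" "pass_entry k \<noteq> (i, j, W)"
  "pass_exit k \<noteq> (i, j, E)" "pass_exit k \<noteq> (i, j, W)"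
  "(i, j, E) \<noteq> pass_entry k" "(i, j, W) \<noteq> pass_entry k"
  "(i, j, E) \<noteq> pass_exit k" "(i, j, W) \<noteq> pass_exit k"
  by (simp_all add: pass_entry_def pass_exit_def)

lemma conn_tiles [simp]: "conn (tiles i j) d = Some (opposite d)"
  by (cases d) (simp_all add: tiles_def)

lemma sport_tiles [simp]: "sport 1 n tiles p \<longleftrightarrow> in_mosaic 1 n p"
  by (auto simp: sport_def in_mosaic_def split: prod.splits)

lemma pairing_E: "pairing (0, n - 1, E) = pass_entry 0"
  and pairing_W: "pairing (0, 0, W) = pass_exit (n - 1)"
  by (simp_all add: pairing_def)

lemma pairing_pass_entry:
  assumes "k < n"
  shows "pairing (pass_entry k) = (if k = 0 then (0, n - 1, E) else pass_exit (k - 1))"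
proof -
  obtain d where d: "pass_entry k = (0, \<sigma> k, d)" "d \<noteq> E" "d \<noteq> W"
    by (auto simp: pass_entry_def)
  then show ?thesis
    using \<tau>_\<sigma>[OF assms] unfolding pairing_def by auto
qed

lemma pairing_pass_exit:
  assumes "k < n"
  shows "pairing (pass_exit k) = (if k = n - 1 then (0, 0, W) else pass_entry (k + 1))"
proof -
  obtain d where d: "pass_exit k = (0, \<sigma> k, d)" "d \<noteq> E" "d \<noteq> W"
    by (auto simp: pass_exit_def)
  moreover have "pass_exit k \<noteq> pass_entry k"
    using pass_entry_neq_exit assms by metis
  ultimately show ?thesis
    using \<tau>_\<sigma>[OF assms] unfolding pairing_def by auto
qed

lemma bport_pass:
  "k < n \<Longrightarrow> bport 1 n (pass_entry k)" "k < n \<Longrightarrow> bport 1 n (pass_exit k)"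
  by (simp_all add: bport_def pass_entry_def pass_exit_def \<sigma>_less)

lemma bport_horizontal: "bport 1 n (0, 0, W)" "bport 1 n (0, n - 1, E)"
  using n_pos by (simp_all add: bport_def)

lemma bport_cases:
  assumes "bport 1 n p"
  obtains "p = (0, 0, W)" | "p = (0, n - 1, E)"
  | k where "k < n" "p = pass_entry k" | k where "k < n" "p = pass_exit k"
proof -
  obtain j d where p: "p = (0, j, d)" "j < n"
    using assms by (auto simp: bport_def)
  consider "d = W" | "d = E" | "d = N \<or> d = S" by (cases d) auto
  then show thesis
  proof cases
    case 3
    then have "p = pass_entry (\<tau> j) \<or> p = pass_exit (\<tau> j)"
      using p by (auto simp: pass_entry_def pass_exit_def \<sigma>_\<tau>)
    then show thesis using that \<tau>_less[OF p(2)] by blast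
  qed (use assms p that in \<open>auto simp: bport_def\<close>)
qed

lemma pairing_involution:
  assumes "bport 1 n p"
  shows "bport 1 n (pairing p) \<and> pairing p \<noteq> p \<and> pairing (pairing p) = p"
  using assms
proof (cases rule: bport_cases)
  case 1
  then show ?thesis
    using n_pos bport_pass(2)[of "n - 1"] pairing_pass_exit[of "n - 1"]
    by (simp add: pairing_W)
next
  case 2
  then show ?thesis
    using n_pos bport_pass(1)[of 0] pairing_pass_entry[of 0]
    by (simp add: pairing_E)
next
  case (3 k)
  show ?thesis
  proof (cases "k = 0")
    case True
    then show ?thesis
      using 3 bport_horizontal(2) by (simp add: pairing_pass_entry pairing_E)
  next
    case False
    with 3 have "k - 1 < n" "k - 1 \<noteq> n - 1" by auto
    then show ?thesis
      using 3 False bport_pass(2) pass_entry_neq_exit[of k "k - 1"]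
      by (simp add: pairing_pass_entry pairing_pass_exit)
  qed
next
  case (4 k)
  show ?thesis
  proof (cases "k = n - 1")
    case True
    then show ?thesis
      using 4 bport_horizontal(1) by (simp add: pairing_pass_exit pairing_W)
  next
    case False
    with 4 have "k + 1 < n" by auto
    then show ?thesis
      using 4 False bport_pass(1) pass_entry_neq_exit[of "k + 1" k]
      by (simp add: pairing_pass_entry pairing_pass_exit)
  qed
qed

lemma step_tiles: "step 1 n tiles pairing (i, j, d) = across 1 n pairing (i, j, opposite d)"
  by (simp add: step_def)

lemma step_pass_entry: "k < n \<Longrightarrow> step 1 n tiles pairing (pass_entry k) = pairing (pass_exit k)"
  using bport_pass(2)[of k]
  by (cases "upward k") (simp_all add: pass_entry_def pass_exit_def step_tiles across_def)

lemma tour_0: "tour 0 = (0, 0, W)"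
  using n_pos by (simp add: tour_def)

lemma step_tour:
  assumes "k < 2 * n"
  shows "step 1 n tiles pairing (tour k) = tour (Suc k mod (2 * n))"
proof -
  consider "Suc k < n" | "Suc k = n" | "n \<le> k" by linarith
  then show ?thesis
  proof cases
    case 1
    then have "step 1 n tiles pairing (tour k) = (0, Suc k, W)"
      by (auto simp: tour_def step_tiles across_def bport_def)
    with 1 show ?thesis by (simp add: tour_def)
  next
    case 2
    then have "step 1 n tiles pairing (tour k) = pairing (0, n - 1, E)"
      by (auto simp: tour_def step_tiles across_def bport_def)
    with 2 show ?thesis by (simp add: tour_def pairing_E)
  next
    case 3
    then have "k - n < n" using assms by simp
    then have step: "step 1 n tiles pairing (tour k) =
        (if k - n = n - 1 then (0, 0, W) else pass_entry (k - n + 1))"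
      using 3 by (simp add: tour_def step_pass_entry pairing_pass_exit)
    show ?thesis
    proof (cases "k - n = n - 1")
      case True
      then have "Suc k = 2 * n" using 3 n_pos by simp
      with True step show ?thesis by (simp add: tour_0)
    next
      case False
      then have "Suc k < 2 * n" "Suc k - n = k - n + 1" using 3 assms by auto
      with False step show ?thesis by (simp add: tour_def)
    qed
  qed
qed

lemma funpow_step_tour: "k < 2 * n \<Longrightarrow> (step 1 n tiles pairing ^^ k) (tour 0) = tour k"
  by (induction k) (simp_all add: step_tour)

lemma orbit_len_tour: "orbit_len 1 n tiles pairing (tour 0) = 2 * n"
  unfolding orbit_len_def
proof (rule Least_equality)
  obtain m where m: "2 * n = Suc m"
    using n_pos by (cases "2 * n") auto
  then have "(step 1 n tiles pairing ^^ (2 * n)) (tour 0) = step 1 n tiles pairing (tour m)"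
    using funpow_step_tour[of m] by simp
  then show "0 < 2 * n \<and> (step 1 n tiles pairing ^^ (2 * n)) (tour 0) = tour 0"
    using m step_tour[of m] by simp
next
  fix k assume "0 < k \<and> (step 1 n tiles pairing ^^ k) (tour 0) = tour 0"
  moreover have "tour k \<noteq> tour 0" if "0 < k" for k
    using that n_pos by (auto simp: tour_def)
  ultimately show "2 * n \<le> k"
    using funpow_step_tour by (metis not_le)
qed

lemma visits_tour: "visits 1 n tiles pairing (tour 0) = map tour [0..<2 * n]"
  unfolding visits_def orbit_len_tour using funpow_step_tour by simp

definition tour_exit :: "nat \<Rightarrow> port" where
  "tour_exit k = (case tour k of (i, j, d) \<Rightarrow> (i, j, opposite d))"

lemma in_mosaic_tour: "k < 2 * n \<Longrightarrow> in_mosaic 1 n (tour k)"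
  and in_mosaic_tour_exit: "k < 2 * n \<Longrightarrow> in_mosaic 1 n (tour_exit k)"
  by (auto simp: tour_def tour_exit_def pass_entry_def in_mosaic_def \<sigma>_less)

lemma in_mosaic_cases:
  assumes "in_mosaic 1 n p"
  obtains k where "k < 2 * n" "p = tour k \<or> p = tour_exit k"
proof -
  obtain j d where p: "p = (0, j, d)" "j < n"
    using assms by (auto simp: in_mosaic_def)
  consider "d = W" | "d = E" | "d = N \<or> d = S" by (cases d) auto
  then show thesis
  proof cases
    case 1
    then show thesis using that[of j] p by (simp add: tour_def)
  next
    case 2
    then show thesis using that[of j] p by (simp add: tour_def tour_exit_def)
  next
    case 3
    have "\<tau> j < n" using p(2) by (rule \<tau>_less)
    moreover have "p = pass_entry (\<tau> j) \<or> p = tour_exit (n + \<tau> j)"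
      using p 3 by (auto simp: tour_exit_def tour_def pass_entry_def \<sigma>_\<tau>)
    ultimately show thesis
      using that[of "n + \<tau> j"] by (auto simp: tour_def)
  qed
qed

lemma link_tour_exit:
  assumes "k < 2 * n"
  shows "link 1 n tiles pairing (tour k) (tour_exit k)"
    and "link 1 n tiles pairing (tour_exit k) (tour k)"
    and "link 1 n tiles pairing (tour_exit k) (tour (Suc k mod (2 * n)))"
  using in_mosaic_tour[OF assms] in_mosaic_tour_exit[OF assms] step_tour[OF assms]
  by (auto simp: link_def tour_exit_def step_def split: prod.splits)

lemma tour_connected:
  "(link 1 n tiles pairing)\<^sup>*\<^sup>* (tour (k mod (2 * n))) (tour ((k + j) mod (2 * n)))"
proof (induction j)
  case (Suc j)
  have "(k + j) mod (2 * n) < 2 * n" using n_pos by simp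
  with link_tour_exit(1,3) have "(link 1 n tiles pairing)\<^sup>*\<^sup>* (tour ((k + j) mod (2 * n)))
      (tour (Suc ((k + j) mod (2 * n)) mod (2 * n)))"
    by (meson converse_rtranclp_into_rtranclp r_into_rtranclp)
  with Suc show ?case by (simp add: mod_Suc_eq)
qed simp

lemma tour_connected_0:
  assumes "k < 2 * n"
  shows "(link 1 n tiles pairing)\<^sup>*\<^sup>* (tour 0) (tour k)"
    and "(link 1 n tiles pairing)\<^sup>*\<^sup>* (tour k) (tour 0)"
  using tour_connected[of 0 k] tour_connected[of k "2 * n - k"] assms by simp_all

lemma valid_mosaic_row: "valid_mosaic 1 n tiles pairing"
  unfolding valid_mosaic_def
proof (intro conjI allI impI)
  fix p q assume "sport 1 n tiles p" "sport 1 n tiles q"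
  then obtain k l where "k < 2 * n" "l < 2 * n"
    and "p = tour k \<or> p = tour_exit k" "q = tour l \<or> q = tour_exit l"
    by (metis sport_tiles in_mosaic_cases)
  then show "(link 1 n tiles pairing)\<^sup>*\<^sup>* p q"
    using tour_connected_0 link_tour_exit
    by (meson converse_rtranclp_into_rtranclp rtranclp.rtrancl_into_rtrancl rtranclp_trans)
next
  fix p assume "in_mosaic 1 n p"
  then show "sport 1 n tiles p \<longleftrightarrow> sport 1 n tiles (across 1 n pairing p)"
    using in_mosaic_across pairing_involution by auto
next
  have "sport 1 n tiles (tour 0)"
    using in_mosaic_tour[of 0] n_pos by simp
  then show "\<exists>p. sport 1 n tiles p" ..
qed (use n_pos pairing_involution in auto)

lemma tour_visits_W: "j < n \<Longrightarrow> (0, j, W) \<in> tour ` {..<2 * n}"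
  by (rule image_eqI[of _ _ j]) (simp_all add: tour_def)

lemma tour_visits_S: "j < n \<Longrightarrow> (0, j, S) \<in> tour ` {..<2 * n} \<longleftrightarrow> s j = ov j"
proof
  assume "(0, j, S) \<in> tour ` {..<2 * n}"
  then obtain k where "tour k = (0, j, S)" by auto
  then have "pass_entry (k - n) = (0, j, S)"
    by (simp add: tour_def split: if_splits)
  then show "s j = ov j"
    by (auto simp: pass_entry_def upward_def split: if_splits)
next
  assume "j < n" "s j = ov j"
  then have "tour (n + \<tau> j) = (0, j, S)"
    by (simp add: tour_def pass_entry_def upward_def \<sigma>_\<tau>)
  moreover have "n + \<tau> j < 2 * n" using \<open>j < n\<close> \<tau>_less by simp
  ultimately show "(0, j, S) \<in> tour ` {..<2 * n}"
    by (metis image_eqI lessThan_iff)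
qed

lemma mosaic_code_row:
  "mosaic_code 1 n tiles pairing (tour 0) =
     map (\<lambda>j. (j, ov j, s j)) [0..<n] @ map (\<lambda>k. (\<sigma> k, \<not> ov (\<sigma> k), s (\<sigma> k))) [0..<n]"
proof -
  define g where "g k = (if k < n then (k, ov k, s k)
    else (\<sigma> (k - n), \<not> ov (\<sigma> (k - n)), s (\<sigma> (k - n))))" for k
  define V where "V = set (map tour [0..<2 * n])"
  have "V = tour ` {..<2 * n}" by (auto simp: V_def)
  then have "(0, j, W) \<in> V" "(0, j, S) \<in> V \<longleftrightarrow> s j = ov j" if "j < n" for j
    using that tour_visits_W tour_visits_S by simp_all
  then have "mosaic_code 1 n tiles pairing (tour 0) = concat (map (\<lambda>k. [g k]) [0..<2 * n])"
    unfolding mosaic_code_def Let_def visits_tour map_map V_def[symmetric]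
    using \<sigma>_less
    by (intro arg_cong[where f = concat] map_cong)
      (auto simp: g_def tour_def tiles_def pass_entry_def upward_def)
  also have "\<dots> = map g [0..<n] @ map g [n..<n + n]"
    by (simp add: upt_add_eq_append[of 0 n n] mult_2)
  also have "\<dots> = map (\<lambda>j. (j, ov j, s j)) [0..<n] @ map (\<lambda>k. (\<sigma> k, \<not> ov (\<sigma> k), s (\<sigma> k))) [0..<n]"
    by (simp add: g_def flip: map_add_upt)
  finally show ?thesis .
qed

end

section \<open>Splitting a Gauss code with a maximal window\<close>

lemma count_list_distinct: "distinct xs \<Longrightarrow> x \<in> set xs \<Longrightarrow> count_list xs x = 1"
  by (induction xs) auto

lemma filter_fst_distinct:
  assumes "distinct (map fst xs)" "i < length xs"
  shows "filter (\<lambda>e. fst e = fst (xs ! i)) xs = [xs ! i]"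
  using assms
proof (induction xs arbitrary: i)
  case (Cons x xs)
  have fresh: "fst e \<noteq> fst x" if "e \<in> set xs" for e
    using Cons.prems(1) that by (metis distinct.simps(2) image_eqI list.set_map list.simps(9))
  show ?case
  proof (cases i)
    case 0
    with fresh show ?thesis by (simp add: filter_empty_conv)
  next
    case (Suc j)
    with Cons.prems have "xs ! j \<in> set xs" by simp
    then have "fst x \<noteq> fst (xs ! j)" using fresh by metis
    with Suc Cons show ?thesis by simp
  qed
qed simp

lemma valid_gc_second_occurrence:
  assumes "valid_gc w" and "filter (\<lambda>e. fst e = fst x) w = [x, y]"
  shows "y = (fst x, \<not> fst (snd x), snd (snd x))"
proof -
  have "x \<in> set (filter (\<lambda>e. fst e = fst x) w)"
    using assms(2) by simp
  then have "x \<in> set w" by simp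
  then obtain s where
    "[x, y] \<in> {[(fst x, True, s), (fst x, False, s)], [(fst x, False, s), (fst x, True, s)]}"
    using assms unfolding valid_gc_def by (metis image_eqI)
  then show ?thesis by (cases x) auto
qed

lemma twice_labelled_halves:
  assumes twice: "twice_labelled w" and len: "length w = 2 * n"
    and distinct_A: "distinct (map fst (take n w))"
  shows "set (map fst (take n w)) = labels w" (is "set ?A = _")
    and "set (map fst (drop n w)) = labels w" (is "set ?B = _")
    and "distinct (map fst (drop n w))"
proof -
  have card: "card (labels w) = n"
    using twice_labelled_length[OF twice] len by simp
  moreover have "set ?A \<subseteq> labels w" "set ?B \<subseteq> labels w"
    by (auto simp: labels_def dest: in_set_takeD in_set_dropD)
  moreover have "card (set ?A) = n"
    using distinct_card[OF distinct_A] len by simp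
  ultimately show set_A: "set ?A = labels w"
    by (intro card_subset_eq) (auto simp: labels_def)
  have "l \<in> set ?B" if "l \<in> labels w" for l
  proof -
    have "count_list (map fst w) l = 2"
      using twice that by (auto simp: twice_labelled_def labels_def count_list_0_iff)
    moreover have "count_list ?A l = 1"
      using count_list_distinct distinct_A set_A that by metis
    moreover have "map fst w = ?A @ ?B"
      by (simp flip: map_append)
    ultimately have "count_list ?B l \<noteq> 0" by simp
    then show ?thesis by (simp add: count_list_0_iff)
  qed
  with \<open>set ?B \<subseteq> labels w\<close> show set_B: "set ?B = labels w" by blast
  show "distinct ?B"
    using len set_B card by (intro card_distinct) simp
qed

lemma valid_gc_halves:
  assumes valid: "valid_gc w" and len: "length w = 2 * n"
    and distinct_A: "distinct (map fst (take n w))"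
  obtains \<sigma> where "bij_betw \<sigma> {..<n} {..<n}"
    "\<And>k. k < n \<Longrightarrow> w ! (n + k) = (fst (w ! \<sigma> k), \<not> fst (snd (w ! \<sigma> k)), snd (snd (w ! \<sigma> k)))"
proof -
  define A where "A = map fst (take n w)"
  define B where "B = map fst (drop n w)"
  have set_A: "set A = labels w" and set_B: "set B = labels w" and distinct_B: "distinct B"
    using twice_labelled_halves[OF valid_gc_twice_labelled[OF valid] len distinct_A]
    by (simp_all add: A_def B_def)
  have bij_A: "bij_betw ((!) A) {..<n} (labels w)"
    and bij_B: "bij_betw ((!) B) {..<n} (labels w)"
    using distinct_A distinct_B set_A set_B len
    by (simp_all add: bij_betw_nth A_def B_def)
  define \<sigma> where "\<sigma> = inv_into {..<n} ((!) A) \<circ> (!) B"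
  have bij: "bij_betw \<sigma> {..<n} {..<n}"
    unfolding \<sigma>_def using bij_B bij_betw_inv_into[OF bij_A] by (rule bij_betw_trans)
  have "w ! (n + k) = (fst (w ! \<sigma> k), \<not> fst (snd (w ! \<sigma> k)), snd (snd (w ! \<sigma> k)))"
    if k: "k < n" for k
  proof -
    have \<sigma>k: "\<sigma> k < n" using bij k by (auto simp: bij_betw_def)
    have "A ! \<sigma> k = B ! k"
      using bij_A bij_B k unfolding \<sigma>_def
      by (simp add: bij_betw_inv_into_right bij_betw_apply)
    then have same_label: "fst (w ! \<sigma> k) = fst (w ! (n + k))"
      using k \<sigma>k len by (simp add: A_def B_def)
    let ?l = "fst (w ! \<sigma> k)"
    have "filter (\<lambda>e. fst e = ?l) (take n w) = [w ! \<sigma> k]"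
      using filter_fst_distinct[OF distinct_A, of "\<sigma> k"] \<sigma>k len by simp
    moreover have "filter (\<lambda>e. fst e = ?l) (drop n w) = [w ! (n + k)]"
      using filter_fst_distinct[of "drop n w" k] distinct_B k len same_label
      by (simp add: B_def)
    moreover have "filter (\<lambda>e. fst e = ?l) w =
        filter (\<lambda>e. fst e = ?l) (take n w) @ filter (\<lambda>e. fst e = ?l) (drop n w)"
      by (simp flip: filter_append)
    ultimately have "filter (\<lambda>e. fst e = ?l) w = [w ! \<sigma> k, w ! (n + k)]"
      by simp
    with valid show ?thesis
      by (rule valid_gc_second_occurrence)
  qed
  with bij that show thesis by blast
qed

lemma row_mosaic_represents:
  assumes valid: "valid_gc w" and len: "length w = 2 * n"
    and distinct: "distinct (map fst (take n w))" and "0 < n"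
  obtains T P where "mosaic_represents 1 n T P w"
proof -
  obtain \<sigma> where bij: "bij_betw \<sigma> {..<n} {..<n}"
    and second_half: "\<And>k. k < n \<Longrightarrow>
      w ! (n + k) = (fst (w ! \<sigma> k), \<not> fst (snd (w ! \<sigma> k)), snd (snd (w ! \<sigma> k)))"
    using valid_gc_halves[OF valid len distinct] by blast
  define ov where "ov j = fst (snd (w ! j))" for j
  define s where "s j = snd (snd (w ! j))" for j
  interpret row_mosaic n \<sigma> ov s
    using \<open>0 < n\<close> bij by unfold_locales
  define c where "c = mosaic_code 1 n tiles pairing (tour 0)"
  have c: "c = map (\<lambda>j. (j, ov j, s j)) [0..<n] @ map (\<lambda>k. (\<sigma> k, \<not> ov (\<sigma> k), s (\<sigma> k))) [0..<n]"
    unfolding c_def by (rule mosaic_code_row)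
  have "labels c \<subseteq> {..<n}"
    using \<sigma>_less by (auto simp: c labels_def)
  moreover have "inj_on (\<lambda>j. fst (w ! j)) {..<n}"
    using inj_on_nth[OF distinct, of "{..<n}"] len by (simp add: inj_on_def)
  ultimately have "vequiv c (map (\<lambda>(l, ov, s). (fst (w ! l), ov, s)) c)"
    by (intro vequiv_relabel_inj_on) (rule inj_on_subset)
  also have "map (\<lambda>(l, ov, s). (fst (w ! l), ov, s)) c = w"
  proof (rule nth_equalityI)
    fix k assume "k < length (map (\<lambda>(l, ov, s). (fst (w ! l), ov, s)) c)"
    then have "k < 2 * n" by (simp add: c)
    then show "map (\<lambda>(l, ov, s). (fst (w ! l), ov, s)) c ! k = w ! k"
      using second_half[of "k - n"] by (cases "k < n") (simp_all add: c nth_append ov_def s_def)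
  qed (simp add: c len)
  finally have "vequiv c w" .
  moreover have "sport 1 n tiles (tour 0)"
    using in_mosaic_tour[of 0] \<open>0 < n\<close> by simp
  ultimately have "mosaic_represents 1 n tiles pairing w"
    using valid_mosaic_row unfolding mosaic_represents_def c_def by blast
  then show thesis by (rule that)
qed

lemma valid_gc_rotate1: "valid_gc w \<Longrightarrow> valid_gc (rotate1 w)"
proof (cases w)
  case (Cons x ys)
  assume valid: "valid_gc w"
  show ?thesis
    unfolding valid_gc_def
  proof
    fix l assume "l \<in> fst ` set (rotate1 w)"
    then obtain s where
      "filter (\<lambda>e. fst e = l) w \<in> {[(l, True, s), (l, False, s)], [(l, False, s), (l, True, s)]}"
      using valid unfolding valid_gc_def by auto
    then have "filter (\<lambda>e. fst e = l) (rotate1 w) \<in>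
        {[(l, True, s), (l, False, s)], [(l, False, s), (l, True, s)]}"
      unfolding Cons by (cases "fst x = l") auto
    then show "\<exists>s. filter (\<lambda>e. fst e = l) (rotate1 w) \<in>
        {[(l, True, s), (l, False, s)], [(l, False, s), (l, True, s)]}" ..
  qed
qed simp

lemma valid_gc_rotate: "valid_gc w \<Longrightarrow> valid_gc (rotate k w)"
  by (induction k) (simp_all add: valid_gc_rotate1)

lemma max_window_attained: "\<exists>r. distinct (map fst (take (max_window w) (rotate r w)))"
proof -
  let ?S = "{k. k \<le> length w \<and> (\<exists>r. distinct (map fst (take k (rotate r w))))}"
  have "finite ?S" by (rule finite_subset[of _ "{..length w}"]) auto
  moreover have "0 \<in> ?S" by simp
  ultimately have "Max ?S \<in> ?S" by (intro Max_in) auto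
  then show ?thesis by (auto simp: max_window_def)
qed

theorem mainTheorem3:
  fixes K \<omega> :: gcode and n :: nat
  assumes "valid_gc K"
    and "crossing_number K = n"
    and "valid_gc \<omega>" and "vequiv K \<omega>" and "length \<omega> = 2 * n"
    and "max_window \<omega> = n"
    and "1 \<le> n"
  shows "tile_number K = n \<and> row_number K = n"
proof -
  obtain r where distinct: "distinct (map fst (take n (rotate r \<omega>)))"
    using max_window_attained[of \<omega>] assms(6) by auto
  have "vequiv K (rotate r \<omega>)"
    using assms(4) vmove.rot vmove_imp_vequiv vequiv_trans by blast
  moreover obtain T P where "mosaic_represents 1 n T P (rotate r \<omega>)"
    using row_mosaic_represents[OF valid_gc_rotate[OF assms(3)] _ distinct] assms(5,7) by auto
  ultimately have "mosaic_represents 1 n T P K"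
    by (blast intro: mosaic_represents_vequiv vequiv_sym)
  then show ?thesis
    using crossing_number_le_tiles[OF assms(1)] assms(2) by (intro tile_number_row_number_eq) auto
qed

end
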